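(* Let $S_N$ be the star graph on $N$ vertices. Then its PIR capacity satisfies $\mathscr{C}(S_N)\le O(N^{-1/2})$ as $N\to\infty$.
   Context: The star graph $S_N$ has $N$ vertices (servers), one of which has degree $N-1$ and the others degree $1$; so there are $K=N-1$ files, file $W_i$ being stored on leaf server $S_i$ and the center server $S_N$. Graph-based PIR model: files are independent, each uniform on $\mathbb{F}_2^L$; a user wants $W_\theta$, $\theta$ uniform on $[K]$ and independent of the files; it sends queries $Q_1,\dots,Q_N$ (independent of the files) to the servers; server $i$ answers $A_i$, a deterministic function of $Q_i$ and the files stored on it. Reliability: $W_\theta$ is determined by all answers and queries. Privacy: $H(\theta\mid Q_i,W_{S_i})=\log K$ for every server $i$, where $W_{S_i}$ is the set of files on server $i$. The rate is $L/\sum_i H(A_i)$; the PIR capacity is the supremum of rates over all schemes and all file lengths $L$. *)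

theory Defs
  imports "HOL-Probability.Probability" "HOL-Library.Landau_Symbols"
begin

definition pmf_entropy :: "'a pmf \<Rightarrow> real" where
  "pmf_entropy p = - (\<Sum>x\<in>set_pmf p. pmf p x * log 2 (pmf p x))"

definition cond_entropy :: "'w pmf \<Rightarrow> ('w \<Rightarrow> 'a) \<Rightarrow> ('w \<Rightarrow> 'b) \<Rightarrow> real" where
  "cond_entropy J X Y =
     pmf_entropy (map_pmf (\<lambda>\<omega>. (X \<omega>, Y \<omega>)) J) - pmf_entropy (map_pmf Y J)"

text \<open>Star graph S_N: servers 1..N, files 1..N-1; file j is on leaf server j
  and on the centre server N.  Set of (indices of) files stored on server i.\<close>
definition star_stored :: "nat \<Rightarrow> nat \<Rightarrow> nat set" where
  "star_stored N i = (if i = N then {1..N-1} else {i})"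

text \<open>The uniform distribution on this finite
  set makes the files independent and uniform.\<close>
definition file_space :: "nat \<Rightarrow> nat \<Rightarrow> (nat \<Rightarrow> bool list) set" where
  "file_space K L = {w. (\<forall>j\<in>{1..K}. length (w j) = L) \<and> (\<forall>j. j \<notin> {1..K} \<longrightarrow> w j = [])}"

definition files_dist :: "nat \<Rightarrow> nat \<Rightarrow> (nat \<Rightarrow> bool list) pmf" where
  "files_dist K L = pmf_of_set (file_space K L)"

text \<open>Restriction of the file tuple to a set of indices (what a server sees).\<close>
definition restrict_files :: "nat set \<Rightarrow> (nat \<Rightarrow> bool list) \<Rightarrow> nat \<Rightarrow> bool list" where
  "restrict_files S w = (\<lambda>j. if j \<in> S then w j else [])"

text \<open>P : joint law of (theta, Q) with Q i the query sent to server i (queries encoded as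
  naturals); finitely supported; theta uniform on [K]; independent of the files
  (the full joint law is pair_pmf P (files_dist K L)).
  ans i q w : answer of server i (encoded as a natural), a deterministic function of
  the query and the files stored on server i.\<close>
definition star_pir_scheme ::
  "nat \<Rightarrow> nat \<Rightarrow> (nat \<times> (nat \<Rightarrow> nat)) pmf \<Rightarrow> (nat \<Rightarrow> nat \<Rightarrow> (nat \<Rightarrow> bool list) \<Rightarrow> nat) \<Rightarrow> bool"
  where
  "star_pir_scheme N L P ans \<longleftrightarrow>
     (let K = N - 1; J = pair_pmf P (files_dist K L) in
      finite (set_pmf P) \<and>
      map_pmf fst P = pmf_of_set {1..K} \<and>
      (\<forall>i\<in>{1..N}. \<forall>q w w'. (\<forall>j\<in>star_stored N i. w j = w' j) \<longrightarrow> ans i q w = ans i q w') \<and>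
      \<comment> \<open>reliability: W_theta is determined by (theta and) all queries and answers\<close>
      (\<exists>dec. \<forall>\<omega>\<in>set_pmf J.
          dec (fst (fst \<omega>), map (snd (fst \<omega>)) [1..<N+1],
               map (\<lambda>i. ans i (snd (fst \<omega>) i) (snd \<omega>)) [1..<N+1])
          = snd \<omega> (fst (fst \<omega>))) \<and>
      \<comment> \<open>privacy: H(theta | Q_i, W_{S_i}) = log K for every server i\<close>
      (\<forall>i\<in>{1..N}.
          cond_entropy J (\<lambda>\<omega>. fst (fst \<omega>))
            (\<lambda>\<omega>. (snd (fst \<omega>) i, restrict_files (star_stored N i) (snd \<omega>)))
          = log 2 (real K)))"

definition star_pir_rate ::
  "nat \<Rightarrow> nat \<Rightarrow> (nat \<times> (nat \<Rightarrow> nat)) pmf \<Rightarrow> (nat \<Rightarrow> nat \<Rightarrow> (nat \<Rightarrow> bool list) \<Rightarrow> nat) \<Rightarrow> real"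
  where
  "star_pir_rate N L P ans =
     real L / (\<Sum>i\<in>{1..N}.
        pmf_entropy (map_pmf (\<lambda>\<omega>. ans i (snd (fst \<omega>) i) (snd \<omega>))
                      (pair_pmf P (files_dist (N - 1) L))))"

definition star_pir_capacity :: "nat \<Rightarrow> real" where
  "star_pir_capacity N =
     Sup {star_pir_rate N L P ans | L P ans. L \<ge> 1 \<and> star_pir_scheme N L P ans}"

end

theory Submission
  imports Defs
begin

text \<open>
  Fix a scheme and write \<open>a\<^sub>i = H(A\<^sub>i)\<close>. Privacy at server \<open>i\<close> forces the query \<open>Q\<^sub>i\<close> to be
  independent of \<open>\<theta>\<close>, so conditioning on \<open>\<theta> = k\<close> changes neither the law of any single query nor
  the joint law of the centre's query, its answer and the files. Given \<open>\<theta> = k\<close> and a set \<open>U\<close> of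
  leaves with \<open>k \<notin> U\<close>, the file \<open>W\<^sub>k\<close> is recovered from \<open>A\<^sub>N\<close>, the queries, the files \<open>W\<^sub>U\<close>
  (which determine the answers of the leaves in \<open>U\<close>) and the answers of the other leaves; as the
  files are independent of the queries this yields
  \<open>H(A\<^sub>N | Q\<^sub>N, W\<^sub>U) - H(A\<^sub>N | Q\<^sub>N, W\<^sub>U, W\<^sub>k) \<ge> L - (\<Sum>j\<notin>U. a\<^sub>j)\<close>.
  Revealing the files of a set \<open>I\<close> of leaves one at a time and telescoping gives
  \<open>|I| (L - (\<Sum>j\<in>I. a\<^sub>j)) \<le> a\<^sub>N\<close>. By Markov's inequality at least half of the \<open>K = N - 1\<close> leaves
  have \<open>a\<^sub>j \<le> 2 (\<Sum>i. a\<^sub>i) / K\<close>; taking \<open>I\<close> among them with \<open>|I| = \<lfloor>\<surd>K\<rfloor>\<close> gives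
  \<open>\<surd>K L \<le> 4 (\<Sum>i. a\<^sub>i)\<close>, i.e. every rate is at most \<open>4 / \<surd>(N - 1)\<close>.
\<close>

section \<open>Entropy of random variables on a finite distribution\<close>

definition entropy_of :: "'a pmf \<Rightarrow> ('a \<Rightarrow> 'b) \<Rightarrow> real" where
  "entropy_of M X = pmf_entropy (map_pmf X M)"

lemma cond_entropy_eq: "cond_entropy M X Y = entropy_of M (\<lambda>\<omega>. (X \<omega>, Y \<omega>)) - entropy_of M Y"
  by (simp add: cond_entropy_def entropy_of_def)

lemma entropy_of_map_pmf: "entropy_of (map_pmf g M) X = entropy_of M (\<lambda>\<omega>. X (g \<omega>))"
  by (simp add: entropy_of_def pmf.map_comp o_def)

lemma cond_entropy_map_pmf:
  "cond_entropy (map_pmf g M) X Y = cond_entropy M (\<lambda>\<omega>. X (g \<omega>)) (\<lambda>\<omega>. Y (g \<omega>))"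
  by (simp add: cond_entropy_eq entropy_of_map_pmf)

lemma entropy_of_const: "entropy_of M (\<lambda>_. c) = 0"
  by (simp add: entropy_of_def pmf_entropy_def)

lemma pmf_entropy_nonneg: "pmf_entropy p \<ge> 0"
proof -
  have "pmf p x * log 2 (pmf p x) \<le> 0" if "x \<in> set_pmf p" for x
    using that pmf_le_1[of p x] by (simp add: pmf_positive mult_nonneg_nonpos)
  then show ?thesis
    unfolding pmf_entropy_def by (simp add: sum_nonpos)
qed

lemma entropy_of_nonneg: "entropy_of M X \<ge> 0"
  by (simp add: entropy_of_def pmf_entropy_nonneg)

lemma sum_set_pmf_map_pmf:
  assumes "finite (set_pmf M)"
  shows "(\<Sum>t\<in>set_pmf (map_pmf f M). pmf (map_pmf f M) t * g t) = (\<Sum>\<omega>\<in>set_pmf M. pmf M \<omega> * g (f \<omega>))"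
proof -
  have "(\<Sum>t\<in>set_pmf (map_pmf f M). pmf (map_pmf f M) t * g t) = measure_pmf.expectation (map_pmf f M) g"
    using assms by (subst integral_measure_pmf[of "set_pmf (map_pmf f M)"]) auto
  also have "\<dots> = measure_pmf.expectation M (\<lambda>\<omega>. g (f \<omega>))"
    by (rule integral_map_pmf)
  also have "\<dots> = (\<Sum>\<omega>\<in>set_pmf M. pmf M \<omega> * g (f \<omega>))"
    using assms by (subst integral_measure_pmf[of "set_pmf M"]) auto
  finally show ?thesis .
qed

lemma entropy_of_eq_sum:
  assumes "finite (set_pmf M)"
  shows "entropy_of M X = - (\<Sum>\<omega>\<in>set_pmf M. pmf M \<omega> * log 2 (pmf (map_pmf X M) (X \<omega>)))"
  unfolding entropy_of_def pmf_entropy_def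
  using sum_set_pmf_map_pmf[OF assms, of X "\<lambda>t. log 2 (pmf (map_pmf X M) t)"] by simp

lemma pmf_map_pmf_le_if_determined:
  assumes "\<And>\<omega>. \<omega> \<in> set_pmf M \<Longrightarrow> X \<omega> = \<phi> (Y \<omega>)" and "\<omega> \<in> set_pmf M"
  shows "pmf (map_pmf Y M) (Y \<omega>) \<le> pmf (map_pmf X M) (X \<omega>)"
proof -
  have "pmf (map_pmf Y M) (Y \<omega>) = measure_pmf.prob M (Y -` {Y \<omega>} \<inter> set_pmf M)"
    by (simp add: pmf_map measure_Int_set_pmf)
  also have "\<dots> \<le> measure_pmf.prob M (X -` {X \<omega>})"
    using assms by (intro measure_pmf.finite_measure_mono) auto
  also have "\<dots> = pmf (map_pmf X M) (X \<omega>)"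
    by (simp add: pmf_map)
  finally show ?thesis .
qed

lemma entropy_of_le_if_determined:
  assumes fin: "finite (set_pmf M)" and det: "\<And>\<omega>. \<omega> \<in> set_pmf M \<Longrightarrow> X \<omega> = \<phi> (Y \<omega>)"
  shows "entropy_of M X \<le> entropy_of M Y"
proof -
  have "log 2 (pmf (map_pmf Y M) (Y \<omega>)) \<le> log 2 (pmf (map_pmf X M) (X \<omega>))" if "\<omega> \<in> set_pmf M" for \<omega>
    using pmf_map_pmf_le_if_determined[of M X \<phi> Y, OF det that] that by (simp add: pmf_positive)
  then show ?thesis
    by (simp add: entropy_of_eq_sum[OF fin] sum_mono mult_left_mono)
qed

lemma entropy_of_eq_if_determined:
  assumes "finite (set_pmf M)"
    and "\<And>\<omega>. \<omega> \<in> set_pmf M \<Longrightarrow> X \<omega> = \<phi> (Y \<omega>)" and "\<And>\<omega>. \<omega> \<in> set_pmf M \<Longrightarrow> Y \<omega> = \<psi> (X \<omega>)"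
  shows "entropy_of M X = entropy_of M Y"
  using entropy_of_le_if_determined[of M X \<phi> Y] entropy_of_le_if_determined[of M Y \<psi> X] assms
  by fastforce

lemma gibbs_inequality:
  assumes fin: "finite (set_pmf M)" and pos: "\<And>\<omega>. \<omega> \<in> set_pmf M \<Longrightarrow> r \<omega> > 0"
    and le1: "(\<Sum>\<omega>\<in>set_pmf M. pmf M \<omega> * r \<omega>) \<le> 1"
  shows "(\<Sum>\<omega>\<in>set_pmf M. pmf M \<omega> * ln (r \<omega>)) \<le> 0"
proof -
  have "(\<Sum>\<omega>\<in>set_pmf M. pmf M \<omega> * ln (r \<omega>)) \<le> (\<Sum>\<omega>\<in>set_pmf M. pmf M \<omega> * (r \<omega> - 1))"
    by (intro sum_mono mult_left_mono) (auto intro: ln_le_minus_one pos)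
  also have "\<dots> = (\<Sum>\<omega>\<in>set_pmf M. pmf M \<omega> * r \<omega>) - 1"
    using sum_pmf_eq_1[OF fin, of M] by (simp add: algebra_simps sum_subtractf)
  finally show ?thesis
    using le1 by simp
qed

lemma gibbs_equality:
  assumes fin: "finite (set_pmf M)" and pos: "\<And>\<omega>. \<omega> \<in> set_pmf M \<Longrightarrow> r \<omega> > 0"
    and le1: "(\<Sum>\<omega>\<in>set_pmf M. pmf M \<omega> * r \<omega>) \<le> 1"
    and eq0: "(\<Sum>\<omega>\<in>set_pmf M. pmf M \<omega> * ln (r \<omega>)) = 0"
    and \<omega>: "\<omega> \<in> set_pmf M"
  shows "r \<omega> = 1"
proof -
  define d where "d \<omega> = pmf M \<omega> * (r \<omega> - 1 - ln (r \<omega>))" for \<omega>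
  have d_nonneg: "d \<omega> \<ge> 0" if "\<omega> \<in> set_pmf M" for \<omega>
    using ln_le_minus_one[OF pos[OF that]] by (simp add: d_def)
  have "(\<Sum>\<omega>\<in>set_pmf M. d \<omega>) = (\<Sum>\<omega>\<in>set_pmf M. pmf M \<omega> * r \<omega>) - 1"
    using sum_pmf_eq_1[OF fin, of M] eq0
    by (simp add: d_def algebra_simps sum_subtractf sum.distrib)
  moreover have "(\<Sum>\<omega>\<in>set_pmf M. d \<omega>) \<ge> 0"
    using d_nonneg by (rule sum_nonneg)
  ultimately have "(\<Sum>\<omega>\<in>set_pmf M. d \<omega>) = 0"
    using le1 by linarith
  then have "d \<omega> = 0"
    using fin d_nonneg \<omega> by (simp add: sum_nonneg_eq_0_iff)
  then have "ln (r \<omega>) = r \<omega> - 1"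
    using pmf_positive[OF \<omega>] by (auto simp: d_def)
  then show ?thesis
    using ln_eq_minus_one pos[OF \<omega>] by blast
qed

lemma sum_pmf_fiber_snd:
  assumes "finite (set_pmf M)"
  shows "(\<Sum>b\<in>{b\<in>set_pmf M. snd b = z}. pmf M b) = pmf (map_pmf snd M) z"
proof -
  have "pmf (map_pmf snd M) z = measure_pmf.prob M (snd -` {z} \<inter> set_pmf M)"
    by (simp add: pmf_map measure_Int_set_pmf)
  also have "\<dots> = sum (pmf M) (snd -` {z} \<inter> set_pmf M)"
    using assms by (intro measure_measure_pmf_finite) auto
  also have "snd -` {z} \<inter> set_pmf M = {b\<in>set_pmf M. snd b = z}"
    by auto
  finally show ?thesis
    by simp
qed

lemma sum_pmf_fiber_product_eq_1:
  fixes A :: "('a \<times> 'c) pmf" and B :: "('b \<times> 'c) pmf"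
  assumes fin: "finite (set_pmf A)" "finite (set_pmf B)" and snd_eq: "map_pmf snd A = map_pmf snd B"
  shows "(\<Sum>(a, b)\<in>(SIGMA a:set_pmf A. {b\<in>set_pmf B. snd b = snd a}).
      pmf A a * pmf B b / pmf (map_pmf snd B) (snd a)) = 1"
proof -
  have "(\<Sum>(a, b)\<in>(SIGMA a:set_pmf A. {b\<in>set_pmf B. snd b = snd a}).
      pmf A a * pmf B b / pmf (map_pmf snd B) (snd a))
      = (\<Sum>a\<in>set_pmf A. pmf A a / pmf (map_pmf snd B) (snd a) * (\<Sum>b\<in>{b\<in>set_pmf B. snd b = snd a}. pmf B b))"
    using fin by (subst sum.Sigma[symmetric]) (auto simp: sum_distrib_left)
  also have "\<dots> = (\<Sum>a\<in>set_pmf A. pmf A a)"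
  proof (intro sum.cong refl)
    fix a assume "a \<in> set_pmf A"
    then have "snd a \<in> set_pmf (map_pmf snd B)"
      by (simp flip: snd_eq)
    then show "pmf A a / pmf (map_pmf snd B) (snd a) * (\<Sum>b\<in>{b\<in>set_pmf B. snd b = snd a}. pmf B b) = pmf A a"
      using sum_pmf_fiber_snd[OF fin(2)] pmf_positive by fastforce
  qed
  also have "\<dots> = 1"
    using fin by (simp add: sum_pmf_eq_1)
  finally show ?thesis .
qed

lemma sum_pmf_cond_product_le_1:
  fixes M :: "('a \<times> 'b \<times> 'c) pmf"
  defines "A \<equiv> map_pmf (\<lambda>(x, y, z). (x, z)) M" and "B \<equiv> map_pmf (\<lambda>(x, y, z). (y, z)) M"
    and "C \<equiv> map_pmf (\<lambda>(x, y, z). z) M"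
  assumes fin: "finite (set_pmf M)"
  shows "(\<Sum>(x, y, z)\<in>set_pmf M. pmf A (x, z) * pmf B (y, z) / pmf C z) \<le> 1"
proof -
  define g where "g = (\<lambda>(x, y, z). pmf A (x, z) * pmf B (y, z) / pmf C z)"
  define D where "D = (SIGMA a:set_pmf A. {b\<in>set_pmf B. snd b = snd a})"
  define e where "e = (\<lambda>(a :: 'a \<times> 'c, b :: 'b \<times> 'c). (fst a, fst b, snd a))"
  have finAB: "finite (set_pmf A)" "finite (set_pmf B)"
    using fin by (simp_all add: A_def B_def)
  have C: "map_pmf snd A = C" "map_pmf snd B = C"
    unfolding A_def B_def C_def pmf.map_comp by (rule map_pmf_cong; auto)+
  have "set_pmf M \<subseteq> e ` D"
  proof
    fix t assume "t \<in> set_pmf M"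
    then obtain x y z where "t = (x, y, z)" "(x, y, z) \<in> set_pmf M"
      by (cases t) auto
    moreover have "((x, z), (y, z)) \<in> D"
      using \<open>(x, y, z) \<in> set_pmf M\<close> by (force simp: A_def B_def D_def)
    ultimately show "t \<in> e ` D"
      by (force simp: e_def)
  qed
  then have "(\<Sum>t\<in>set_pmf M. g t) \<le> (\<Sum>t\<in>e ` D. g t)"
    using finAB by (intro sum_mono2) (auto simp: g_def D_def)
  also have "\<dots> = (\<Sum>(a, b)\<in>D. pmf A a * pmf B b / pmf C (snd a))"
    by (subst sum.reindex) (auto simp: D_def e_def g_def inj_on_def intro!: sum.cong)
  also have "\<dots> = 1"
    using sum_pmf_fiber_product_eq_1[OF finAB] C by (simp add: D_def)
  finally show ?thesis
    by (simp add: g_def)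
qed

lemma pmf_entropy_submodular:
  fixes M :: "('a \<times> 'b \<times> 'c) pmf"
  assumes fin: "finite (set_pmf M)"
  shows "pmf_entropy M + entropy_of M (\<lambda>(x, y, z). z)
    \<le> entropy_of M (\<lambda>(x, y, z). (x, z)) + entropy_of M (\<lambda>(x, y, z). (y, z))"
proof -
  define fxz fyz fz where "fxz = (\<lambda>(x :: 'a, y :: 'b, z :: 'c). (x, z))"
    and "fyz = (\<lambda>(x :: 'a, y :: 'b, z :: 'c). (y, z))" and "fz = (\<lambda>(x :: 'a, y :: 'b, z :: 'c). z)"
  define A B C where "A = map_pmf fxz M" and "B = map_pmf fyz M" and "C = map_pmf fz M"
  define r where "r t = pmf A (fxz t) * pmf B (fyz t) / (pmf M t * pmf C (fz t))" for t
  have pos: "pmf M t > 0" "pmf A (fxz t) > 0" "pmf B (fyz t) > 0" "pmf C (fz t) > 0"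
    if "t \<in> set_pmf M" for t
    using that by (simp_all add: A_def B_def C_def pmf_positive)
  have "(\<Sum>t\<in>set_pmf M. pmf M t * r t) = (\<Sum>t\<in>set_pmf M. pmf A (fxz t) * pmf B (fyz t) / pmf C (fz t))"
    by (intro sum.cong refl) (auto simp: r_def dest: pos(1))
  also have "\<dots> \<le> 1"
    using sum_pmf_cond_product_le_1[OF fin]
    by (simp add: A_def B_def C_def fxz_def fyz_def fz_def case_prod_beta)
  finally have "(\<Sum>t\<in>set_pmf M. pmf M t * ln (r t)) \<le> 0"
    using pos by (intro gibbs_inequality[OF fin]) (simp_all add: r_def)
  moreover have "ln (r t) = ln 2 *
      (log 2 (pmf A (fxz t)) + log 2 (pmf B (fyz t)) - log 2 (pmf M t) - log 2 (pmf C (fz t)))"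
    if "t \<in> set_pmf M" for t
    using pos[OF that] by (simp add: r_def ln_mult ln_div log_def field_simps)
  ultimately have "ln 2 * (pmf_entropy M + entropy_of M fz - entropy_of M fxz - entropy_of M fyz) \<le> 0"
    by (simp add: entropy_of_eq_sum[OF fin] pmf_entropy_def sum_distrib_left sum.distrib sum_subtractf
        algebra_simps flip: A_def B_def C_def cong: sum.cong)
  then show ?thesis
    by (simp add: mult_le_0_iff fxz_def fyz_def fz_def)
qed

lemma entropy_of_submodular:
  assumes "finite (set_pmf M)"
  shows "entropy_of M (\<lambda>\<omega>. (X \<omega>, Y \<omega>, Z \<omega>)) + entropy_of M Z
    \<le> entropy_of M (\<lambda>\<omega>. (X \<omega>, Z \<omega>)) + entropy_of M (\<lambda>\<omega>. (Y \<omega>, Z \<omega>))"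
  using pmf_entropy_submodular[of "map_pmf (\<lambda>\<omega>. (X \<omega>, Y \<omega>, Z \<omega>)) M"] assms
  by (simp add: entropy_of_map_pmf) (simp add: entropy_of_def)

lemma cond_entropy_mono:
  assumes fin: "finite (set_pmf M)" and det: "\<And>\<omega>. \<omega> \<in> set_pmf M \<Longrightarrow> Y \<omega> = \<phi> (Y' \<omega>)"
  shows "cond_entropy M X Y' \<le> cond_entropy M X Y"
proof -
  have "entropy_of M (\<lambda>\<omega>. (X \<omega>, Y' \<omega>, Y \<omega>)) = entropy_of M (\<lambda>\<omega>. (X \<omega>, Y' \<omega>))"
    using det by (intro entropy_of_eq_if_determined[OF fin, where \<phi> = "\<lambda>(x, y'). (x, y', \<phi> y')"
        and \<psi> = "\<lambda>(x, y', y). (x, y')"]) auto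
  moreover have "entropy_of M (\<lambda>\<omega>. (Y' \<omega>, Y \<omega>)) = entropy_of M Y'"
    using det by (intro entropy_of_eq_if_determined[OF fin, where \<phi> = "\<lambda>y'. (y', \<phi> y')" and \<psi> = fst]) auto
  ultimately show ?thesis
    using entropy_of_submodular[OF fin, of X Y' Y] by (simp add: cond_entropy_eq)
qed

lemma cond_entropy_cong_determined:
  assumes "finite (set_pmf M)"
    and "\<And>\<omega>. \<omega> \<in> set_pmf M \<Longrightarrow> Y \<omega> = \<phi> (Y' \<omega>)" and "\<And>\<omega>. \<omega> \<in> set_pmf M \<Longrightarrow> Y' \<omega> = \<psi> (Y \<omega>)"
  shows "cond_entropy M X Y = cond_entropy M X Y'"
  using cond_entropy_mono[of M Y \<phi> Y' X] cond_entropy_mono[of M Y' \<psi> Y X] assms by fastforce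

lemma cond_entropy_const:
  assumes "finite (set_pmf M)"
  shows "cond_entropy M X (\<lambda>_. c) = entropy_of M X"
proof -
  have "entropy_of M (\<lambda>\<omega>. (X \<omega>, c)) = entropy_of M X"
    using entropy_of_eq_if_determined[OF assms, of "\<lambda>\<omega>. (X \<omega>, c)" "\<lambda>x. (x, c)" X fst] by simp
  then show ?thesis
    by (simp add: cond_entropy_eq entropy_of_const)
qed

lemma cond_entropy_le_entropy:
  assumes "finite (set_pmf M)"
  shows "cond_entropy M X Y \<le> entropy_of M X"
proof -
  have "cond_entropy M X Y \<le> cond_entropy M X (\<lambda>_. ())"
    by (rule cond_entropy_mono[OF assms, where \<phi> = "\<lambda>_. ()"]) simp
  then show ?thesis
    by (simp add: cond_entropy_const[OF assms])
qed

lemma cond_entropy_nonneg: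
  assumes "finite (set_pmf M)"
  shows "cond_entropy M X Y \<ge> 0"
  using entropy_of_le_if_determined[OF assms, of Y snd "\<lambda>\<omega>. (X \<omega>, Y \<omega>)"]
  by (simp add: cond_entropy_eq)

lemma entropy_of_pair_le:
  assumes "finite (set_pmf M)"
  shows "entropy_of M (\<lambda>\<omega>. (X \<omega>, Y \<omega>)) \<le> entropy_of M X + entropy_of M Y"
  using cond_entropy_le_entropy[OF assms, of X Y] by (simp add: cond_entropy_eq)

lemma cond_entropy_diff_swap:
  assumes fin: "finite (set_pmf M)"
  shows "cond_entropy M X Z - cond_entropy M X (\<lambda>\<omega>. (Y \<omega>, Z \<omega>))
    = cond_entropy M Y Z - cond_entropy M Y (\<lambda>\<omega>. (X \<omega>, Z \<omega>))"
proof -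
  have "entropy_of M (\<lambda>\<omega>. (X \<omega>, Y \<omega>, Z \<omega>)) = entropy_of M (\<lambda>\<omega>. (Y \<omega>, X \<omega>, Z \<omega>))"
    by (rule entropy_of_eq_if_determined[OF fin, where \<phi> = "\<lambda>(y, x, z). (x, y, z)"
        and \<psi> = "\<lambda>(x, y, z). (y, x, z)"]) auto
  then show ?thesis
    by (simp add: cond_entropy_eq)
qed

lemma cond_entropy_le_if_decodable:
  assumes fin: "finite (set_pmf M)"
    and dec: "\<And>\<omega>. \<omega> \<in> set_pmf M \<Longrightarrow> X \<omega> = dec (Y \<omega>, Q \<omega>, Z \<omega>)"
  shows "cond_entropy M X Z
    \<le> entropy_of M Y + cond_entropy M Q Z - cond_entropy M Q (\<lambda>\<omega>. (X \<omega>, Z \<omega>))"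
proof -
  have "entropy_of M (\<lambda>\<omega>. (Q \<omega>, X \<omega>, Z \<omega>)) \<le> entropy_of M (\<lambda>\<omega>. (Y \<omega>, Q \<omega>, Z \<omega>))"
    using dec by (intro entropy_of_le_if_determined[OF fin, where \<phi> = "\<lambda>(y, q, z). (q, dec (y, q, z), z)"]) auto
  also have "\<dots> \<le> entropy_of M Y + entropy_of M (\<lambda>\<omega>. (Q \<omega>, Z \<omega>))"
    by (rule entropy_of_pair_le[OF fin])
  finally show ?thesis
    by (simp add: cond_entropy_eq)
qed

lemma pmf_entropy_pair_pmf:
  assumes "finite (set_pmf A)" "finite (set_pmf B)"
  shows "pmf_entropy (pair_pmf A B) = pmf_entropy A + pmf_entropy B"
proof -
  have sA: "(\<Sum>a\<in>set_pmf A. pmf A a) = 1" and sB: "(\<Sum>b\<in>set_pmf B. pmf B b) = 1"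
    using assms by (simp_all add: sum_pmf_eq_1)
  have "(\<Sum>x\<in>set_pmf (pair_pmf A B). pmf (pair_pmf A B) x * log 2 (pmf (pair_pmf A B) x))
     = (\<Sum>a\<in>set_pmf A. \<Sum>b\<in>set_pmf B. pmf A a * pmf B b * log 2 (pmf A a * pmf B b))"
    by (simp add: sum.cartesian_product) (auto simp: pmf_pair intro!: sum.cong)
  also have "\<dots> = (\<Sum>a\<in>set_pmf A. \<Sum>b\<in>set_pmf B.
      pmf B b * (pmf A a * log 2 (pmf A a)) + pmf A a * (pmf B b * log 2 (pmf B b)))"
    by (intro sum.cong refl) (simp add: log_mult pmf_positive algebra_simps)
  also have "\<dots> = (\<Sum>a\<in>set_pmf A. pmf A a * log 2 (pmf A a)) + (\<Sum>b\<in>set_pmf B. pmf B b * log 2 (pmf B b))"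
    by (simp add: sum.distrib sum_distrib_left[symmetric] sum_distrib_right[symmetric] sA sB
        sum.swap[of "\<lambda>a b. pmf A a * (pmf B b * log 2 (pmf B b))"])
  finally show ?thesis
    by (simp add: pmf_entropy_def)
qed

lemma entropy_of_pair_pmf:
  assumes "finite (set_pmf A)" "finite (set_pmf B)"
  shows "entropy_of (pair_pmf A B) (\<lambda>\<omega>. (f (fst \<omega>), g (snd \<omega>))) = entropy_of A f + entropy_of B g"
proof -
  have "map_pmf (\<lambda>\<omega>. (f (fst \<omega>), g (snd \<omega>))) (pair_pmf A B) = pair_pmf (map_pmf f A) (map_pmf g B)"
    by (simp add: map_pair[symmetric] case_prod_beta')
  then show ?thesis
    using assms by (simp add: entropy_of_def pmf_entropy_pair_pmf)
qed

lemma entropy_of_pair_pmf_fst: "entropy_of (pair_pmf A B) (\<lambda>\<omega>. f (fst \<omega>)) = entropy_of A f"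
  using entropy_of_map_pmf[of "\<lambda>\<omega>. fst \<omega>" "pair_pmf A B" f] by (simp add: map_fst_pair_pmf)

lemma cond_entropy_pair_pmf_fst:
  "cond_entropy (pair_pmf A B) (\<lambda>\<omega>. f (fst \<omega>)) (\<lambda>\<omega>. h (fst \<omega>)) = cond_entropy A f h"
  using entropy_of_pair_pmf_fst[of A B "\<lambda>a. (f a, h a)"] entropy_of_pair_pmf_fst[of A B h]
  by (simp add: cond_entropy_eq)

lemma cond_entropy_pair_pmf_fst_indep:
  assumes fin: "finite (set_pmf A)" "finite (set_pmf B)"
  shows "cond_entropy (pair_pmf A B) (\<lambda>\<omega>. f (fst \<omega>)) (\<lambda>\<omega>. (h (fst \<omega>), g (snd \<omega>)))
    = cond_entropy A f h"
proof -
  have finAB: "finite (set_pmf (pair_pmf A B))"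
    using fin by simp
  have "entropy_of (pair_pmf A B) (\<lambda>\<omega>. (f (fst \<omega>), h (fst \<omega>), g (snd \<omega>)))
      = entropy_of (pair_pmf A B) (\<lambda>\<omega>. ((f (fst \<omega>), h (fst \<omega>)), g (snd \<omega>)))"
    by (rule entropy_of_eq_if_determined[OF finAB, where \<phi> = "\<lambda>((x, y), z). (x, y, z)"
        and \<psi> = "\<lambda>(x, y, z). ((x, y), z)"]) auto
  then show ?thesis
    using entropy_of_pair_pmf[OF fin, of "\<lambda>a. (f a, h a)" g] entropy_of_pair_pmf[OF fin, of h g]
    by (simp add: cond_entropy_eq)
qed

lemma cond_entropy_pair_pmf_snd_indep:
  assumes fin: "finite (set_pmf A)" "finite (set_pmf B)"
  shows "cond_entropy (pair_pmf A B) (\<lambda>\<omega>. f (snd \<omega>)) (\<lambda>\<omega>. (h (fst \<omega>), g (snd \<omega>)))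
    = cond_entropy B f g"
proof -
  have finAB: "finite (set_pmf (pair_pmf A B))"
    using fin by simp
  have "entropy_of (pair_pmf A B) (\<lambda>\<omega>. (f (snd \<omega>), h (fst \<omega>), g (snd \<omega>)))
      = entropy_of (pair_pmf A B) (\<lambda>\<omega>. (h (fst \<omega>), f (snd \<omega>), g (snd \<omega>)))"
    by (rule entropy_of_eq_if_determined[OF finAB, where \<phi> = "\<lambda>(y, x, z). (x, y, z)"
        and \<psi> = "\<lambda>(x, y, z). (y, x, z)"]) auto
  then show ?thesis
    using entropy_of_pair_pmf[OF fin, of h "\<lambda>b. (f b, g b)"] entropy_of_pair_pmf[OF fin, of h g]
    by (simp add: cond_entropy_eq)
qed

lemma entropy_of_pair_pmf_map_fst:
  "entropy_of (pair_pmf A B) (\<lambda>\<omega>. X (h (fst \<omega>)) (snd \<omega>))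
    = entropy_of (pair_pmf (map_pmf h A) B) (\<lambda>\<omega>. X (fst \<omega>) (snd \<omega>))"
proof -
  have "pair_pmf (map_pmf h A) B = map_pmf (\<lambda>(a, b). (h a, b)) (pair_pmf A B)"
    using map_pair[of h "\<lambda>b. b" A B] by (simp add: pmf.map_ident)
  then show ?thesis
    by (simp add: entropy_of_map_pmf case_prod_beta)
qed

lemma cond_entropy_pair_pmf_map_fst:
  "cond_entropy (pair_pmf A B) (\<lambda>\<omega>. X (h (fst \<omega>)) (snd \<omega>)) (\<lambda>\<omega>. Y (h (fst \<omega>)) (snd \<omega>))
    = cond_entropy (pair_pmf (map_pmf h A) B) (\<lambda>\<omega>. X (fst \<omega>) (snd \<omega>)) (\<lambda>\<omega>. Y (fst \<omega>) (snd \<omega>))"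
  using entropy_of_pair_pmf_map_fst[of A B "\<lambda>a b. (X a b, Y a b)" h]
    entropy_of_pair_pmf_map_fst[of A B Y h]
  by (simp add: cond_entropy_eq)

lemma entropy_of_tuple_le_sum:
  assumes fin: "finite (set_pmf M)" and "finite S"
  shows "entropy_of M (\<lambda>\<omega>. (\<lambda>j. if j \<in> S then X j \<omega> else c)) \<le> (\<Sum>j\<in>S. entropy_of M (X j))"
  using \<open>finite S\<close>
proof (induction S rule: finite_induct)
  case empty
  then show ?case
    by (simp add: entropy_of_const)
next
  case (insert j S)
  have "entropy_of M (\<lambda>\<omega>. (\<lambda>i. if i \<in> insert j S then X i \<omega> else c))
      \<le> entropy_of M (\<lambda>\<omega>. (X j \<omega>, (\<lambda>i. if i \<in> S then X i \<omega> else c)))"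
    by (rule entropy_of_le_if_determined[OF fin, where \<phi> = "\<lambda>(x, t). t(j := x)"]) (auto simp: fun_eq_iff)
  also have "\<dots> \<le> entropy_of M (X j) + entropy_of M (\<lambda>\<omega>. (\<lambda>i. if i \<in> S then X i \<omega> else c))"
    by (rule entropy_of_pair_le[OF fin])
  finally show ?case
    using insert by simp
qed

lemma cond_entropy_pair_pmf_fst_mono:
  assumes fin: "finite (set_pmf A)" "finite (set_pmf B)"
    and Z: "\<And>\<omega>. \<omega> \<in> set_pmf (pair_pmf A B) \<Longrightarrow> h (fst \<omega>) = \<phi> (Z \<omega>)"
    and Z': "\<And>\<omega>. \<omega> \<in> set_pmf (pair_pmf A B) \<Longrightarrow> Z' \<omega> = \<psi> (h (fst \<omega>), snd \<omega>)"
  shows "cond_entropy (pair_pmf A B) fst Z \<le> cond_entropy (pair_pmf A B) fst Z'"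
proof -
  have finAB: "finite (set_pmf (pair_pmf A B))"
    using fin by simp
  have "cond_entropy (pair_pmf A B) fst Z \<le> cond_entropy (pair_pmf A B) fst (\<lambda>\<omega>. h (fst \<omega>))"
    using Z by (rule cond_entropy_mono[OF finAB])
  also have "\<dots> = cond_entropy (pair_pmf A B) fst (\<lambda>\<omega>. (h (fst \<omega>), snd \<omega>))"
    using cond_entropy_pair_pmf_fst[of A B "\<lambda>a. a" h]
      cond_entropy_pair_pmf_fst_indep[OF fin, where f = "\<lambda>a. a" and h = h and g = "\<lambda>b. b"]
    by simp
  also have "\<dots> \<le> cond_entropy (pair_pmf A B) fst Z'"
    using Z' by (rule cond_entropy_mono[OF finAB])
  finally show ?thesis .
qed

lemma pmf_entropy_pmf_of_set:
  assumes "finite S" "S \<noteq> {}"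
  shows "pmf_entropy (pmf_of_set S) = log 2 (real (card S))"
proof -
  have "card S > 0"
    using assms by (simp add: card_gt_0_iff)
  then have "(\<Sum>x\<in>S. 1 / real (card S) * log 2 (1 / real (card S))) = - log 2 (real (card S))"
    by (simp add: log_divide)
  then show ?thesis
    using assms by (simp add: pmf_entropy_def)
qed

lemma pmf_eq_if_eq_on_set_pmf:
  assumes fin: "finite (set_pmf p)" and eq: "\<And>x. x \<in> set_pmf p \<Longrightarrow> pmf q x = pmf p x"
  shows "q = p"
proof -
  have "measure_pmf.prob q (set_pmf p) = 1"
    using eq fin by (simp add: measure_measure_pmf_finite sum_pmf_eq_1)
  then have "set_pmf q \<subseteq> set_pmf p"
    by (simp add: measure_pmf.prob_eq_1 AE_measure_pmf_iff subset_eq)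
  then show ?thesis
    using eq by (intro pmf_eqI) (metis set_pmf_iff subset_eq)
qed

lemma map_pmf_pair_eq_pair_pmf_if_cond_entropy_eq:
  assumes fin: "finite (set_pmf M)" and eq: "cond_entropy M X Y = entropy_of M X"
  shows "map_pmf (\<lambda>\<omega>. (X \<omega>, Y \<omega>)) M = pair_pmf (map_pmf X M) (map_pmf Y M)"
proof -
  define p where "p = map_pmf (\<lambda>\<omega>. (X \<omega>, Y \<omega>)) M"
  define q where "q = pair_pmf (map_pmf X M) (map_pmf Y M)"
  define r where "r t = pmf q t / pmf p t" for t
  have finp: "finite (set_pmf p)"
    using fin by (simp add: p_def)
  have pos: "pmf p (X \<omega>, Y \<omega>) > 0" "pmf (map_pmf X M) (X \<omega>) > 0" "pmf (map_pmf Y M) (Y \<omega>) > 0"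
    if "\<omega> \<in> set_pmf M" for \<omega>
    using that by (simp_all add: p_def pmf_positive)
  have r_pos: "r t > 0" if "t \<in> set_pmf p" for t
    using that pos by (auto simp: p_def r_def pmf_pair q_def)
  have "(\<Sum>t\<in>set_pmf p. pmf p t * r t) = measure_pmf.prob q (set_pmf p)"
    using finp by (auto simp: r_def measure_measure_pmf_finite set_pmf_iff intro!: sum.cong)
  then have le1: "(\<Sum>t\<in>set_pmf p. pmf p t * r t) \<le> 1"
    by simp
  have ln_r: "pmf M \<omega> * ln (r (X \<omega>, Y \<omega>)) = ln 2 * (pmf M \<omega> * log 2 (pmf (map_pmf X M) (X \<omega>))
      + pmf M \<omega> * log 2 (pmf (map_pmf Y M) (Y \<omega>)) - pmf M \<omega> * log 2 (pmf p (X \<omega>, Y \<omega>)))"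
    if "\<omega> \<in> set_pmf M" for \<omega>
    using pos[OF that] by (simp add: r_def q_def pmf_pair ln_mult ln_div log_def field_simps)
  have "(\<Sum>t\<in>set_pmf p. pmf p t * ln (r t)) = (\<Sum>\<omega>\<in>set_pmf M. pmf M \<omega> * ln (r (X \<omega>, Y \<omega>)))"
    unfolding p_def by (rule sum_set_pmf_map_pmf[OF fin])
  also have "\<dots> = ln 2 * ((\<Sum>\<omega>\<in>set_pmf M. pmf M \<omega> * log 2 (pmf (map_pmf X M) (X \<omega>)))
      + (\<Sum>\<omega>\<in>set_pmf M. pmf M \<omega> * log 2 (pmf (map_pmf Y M) (Y \<omega>)))
      - (\<Sum>\<omega>\<in>set_pmf M. pmf M \<omega> * log 2 (pmf p (X \<omega>, Y \<omega>))))"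
    by (simp only: sum.cong[OF refl ln_r] sum_distrib_left[symmetric] sum.distrib sum_subtractf)
  also have "\<dots> = ln 2 * (entropy_of M (\<lambda>\<omega>. (X \<omega>, Y \<omega>)) - entropy_of M X - entropy_of M Y)"
    by (simp add: entropy_of_eq_sum[OF fin] p_def)
  also have "\<dots> = 0"
    using eq by (simp add: cond_entropy_eq)
  finally have "r t = 1" if "t \<in> set_pmf p" for t
    using gibbs_equality[OF finp r_pos le1] that by blast
  then have "q = p"
    using r_pos by (intro pmf_eq_if_eq_on_set_pmf[OF finp]) (fastforce simp: r_def)
  then show ?thesis
    by (simp add: p_def q_def)
qed

lemma map_pmf_cond_pmf_if_indep:
  assumes indep: "map_pmf (\<lambda>\<omega>. (U \<omega>, V \<omega>)) P = pair_pmf (map_pmf U P) (map_pmf V P)"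
    and pos: "pmf (map_pmf U P) a > 0"
  shows "map_pmf V (cond_pmf P {\<omega>. U \<omega> = a}) = map_pmf V P"
proof -
  define A B where "A = map_pmf U P" and "B = map_pmf V P"
  have a: "a \<in> set_pmf A"
    using pos by (metis A_def pmf_positive_iff)
  have prob_a: "measure_pmf.prob (pair_pmf A B) {t. fst t = a} = pmf A a"
    using pmf_map[of fst "pair_pmf A B" a] by (simp add: map_fst_pair_pmf vimage_def)
  have ne: "set_pmf (pair_pmf A B) \<inter> {t. fst t = a} \<noteq> {}"
    using a set_pmf_not_empty[of B] by auto
  have "cond_pmf (pair_pmf A B) {t. fst t = a} = pair_pmf (return_pmf a) B"
  proof (rule pmf_eqI)
    fix t :: "_ \<times> _"
    show "pmf (cond_pmf (pair_pmf A B) {t. fst t = a}) t = pmf (pair_pmf (return_pmf a) B) t"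
      using pos prob_a by (cases t) (simp add: pmf_cond[OF ne] pmf_pair indicator_def flip: A_def)
  qed
  moreover have "cond_pmf (pair_pmf A B) {t. fst t = a}
      = map_pmf (\<lambda>\<omega>. (U \<omega>, V \<omega>)) (cond_pmf P {\<omega>. U \<omega> = a})"
  proof -
    have "set_pmf P \<inter> (\<lambda>\<omega>. (U \<omega>, V \<omega>)) -` {t. fst t = a} \<noteq> {}"
      using a by (auto simp: A_def)
    from cond_map_pmf[OF this] show ?thesis
      by (simp add: indep vimage_def flip: A_def B_def)
  qed
  ultimately have "map_pmf snd (map_pmf (\<lambda>\<omega>. (U \<omega>, V \<omega>)) (cond_pmf P {\<omega>. U \<omega> = a}))
      = map_pmf snd (pair_pmf (return_pmf a) B)"
    by simp
  then show ?thesis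
    by (simp add: pmf.map_comp o_def map_snd_pair_pmf B_def)
qed

section \<open>Uniformly random files\<close>

definition bitstrings :: "nat \<Rightarrow> bool list set" where
  "bitstrings L = {xs. length xs = L}"

lemma finite_bitstrings: "finite (bitstrings L)"
  using finite_lists_length_eq[of "UNIV :: bool set" L] by (simp add: bitstrings_def)

lemma card_bitstrings: "card (bitstrings L) = 2 ^ L"
  using card_lists_length_eq[of "UNIV :: bool set" L] by (simp add: bitstrings_def)

lemma bitstrings_nonempty: "bitstrings L \<noteq> {}"
  using card_bitstrings[of L] by (metis card.empty power_not_zero zero_neq_numeral)

lemma pmf_entropy_uniform_bitstrings: "pmf_entropy (pmf_of_set (bitstrings L)) = real L"
  by (simp add: pmf_entropy_pmf_of_set finite_bitstrings bitstrings_nonempty card_bitstrings)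

lemma file_space_eq_PiE_dflt: "file_space K L = PiE_dflt {1..K} [] (\<lambda>_. bitstrings L)"
  by (auto simp: file_space_def PiE_dflt_def bitstrings_def)

lemma finite_PiE_dflt_bitstrings: "finite A \<Longrightarrow> finite (PiE_dflt A d (\<lambda>_. bitstrings L))"
  by (intro finite_PiE_dflt) (simp_all add: finite_bitstrings)

lemma finite_set_files_dist: "finite (set_pmf (files_dist K L))"
  by (simp add: files_dist_def file_space_eq_PiE_dflt finite_PiE_dflt_bitstrings bitstrings_nonempty)

lemma files_dist_eq_Pi_pmf: "files_dist K L = Pi_pmf {1..K} [] (\<lambda>_. pmf_of_set (bitstrings L))"
  unfolding files_dist_def file_space_eq_PiE_dflt
  by (rule Pi_pmf_of_set[symmetric]) (auto simp: finite_bitstrings bitstrings_nonempty)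

lemma cond_entropy_file_given_files:
  assumes k: "k \<in> {1..K}" "k \<notin> U"
  shows "cond_entropy (files_dist K L) (\<lambda>w. w k) (restrict_files U) = real L"
proof -
  define p where "p = (\<lambda>_ :: nat. pmf_of_set (bitstrings L))"
  define F' where "F' = Pi_pmf ({1..K} - {k}) [] p"
  have "files_dist K L = map_pmf (\<lambda>(y, f). f(k := y)) (pair_pmf (p k) F')"
    unfolding files_dist_eq_Pi_pmf F'_def p_def using k
    by (subst Pi_pmf_insert[symmetric]) (auto simp: insert_absorb)
  moreover have "restrict_files U (f(k := y)) = restrict_files U f" for f y
    using k by (auto simp: restrict_files_def)
  ultimately have "cond_entropy (files_dist K L) (\<lambda>w. w k) (restrict_files U)
      = cond_entropy (pair_pmf (p k) F') (\<lambda>\<omega>. fst \<omega>) (\<lambda>\<omega>. restrict_files U (snd \<omega>))"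
    by (simp add: cond_entropy_map_pmf case_prod_beta)
  also have "\<dots> = cond_entropy (pair_pmf (p k) F') (\<lambda>\<omega>. fst \<omega>) (\<lambda>\<omega>. ((), restrict_files U (snd \<omega>)))"
    by (rule cond_entropy_cong_determined[where \<phi> = snd and \<psi> = "Pair ()"])
      (simp_all add: F'_def p_def set_Pi_pmf o_def finite_bitstrings bitstrings_nonempty
        finite_PiE_dflt_bitstrings)
  also have "\<dots> = cond_entropy (p k) (\<lambda>y. y) (\<lambda>_. ())"
    by (rule cond_entropy_pair_pmf_fst_indep)
      (simp_all add: F'_def p_def set_Pi_pmf o_def finite_bitstrings bitstrings_nonempty
        finite_PiE_dflt_bitstrings)
  also have "\<dots> = real L"
    by (simp add: cond_entropy_const p_def entropy_of_def finite_bitstrings bitstrings_nonempty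
        pmf_entropy_uniform_bitstrings)
  finally show ?thesis .
qed

lemma sum_diff_telescope:
  fixes f :: "'a :: linorder set \<Rightarrow> real"
  assumes "finite I"
  shows "f R - f (R \<union> I) = (\<Sum>k\<in>I. f (R \<union> {j\<in>I. j < k}) - f (insert k (R \<union> {j\<in>I. j < k})))"
  using assms
proof (induction I rule: finite_linorder_max_induct)
  case empty
  then show ?case
    by simp
next
  case (insert b A)
  define g where "g B k = f (R \<union> {j\<in>B. j < k}) - f (insert k (R \<union> {j\<in>B. j < k}))" for B k
  have "b \<notin> A" and below_b: "{j\<in>insert b A. j < b} = A"
    using insert.hyps(2) by auto
  have "sum (g (insert b A)) (insert b A) = g (insert b A) b + sum (g (insert b A)) A"
    using insert.hyps(1) \<open>b \<notin> A\<close> by (rule sum.insert)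
  also have "g (insert b A) b = f (R \<union> A) - f (R \<union> insert b A)"
    unfolding g_def below_b by simp
  also have "sum (g (insert b A)) A = sum (g A) A"
  proof (rule sum.cong[OF refl])
    fix k assume "k \<in> A"
    then have "{j\<in>insert b A. j < k} = {j\<in>A. j < k}"
      using insert.hyps(2) by auto
    then show "g (insert b A) k = g A k"
      by (simp only: g_def)
  qed
  finally show ?case
    using insert.IH by (simp add: g_def)
qed

lemma card_le_twice_card_below_twice_average:
  fixes a :: "'a \<Rightarrow> real"
  assumes fin: "finite A" and nonneg: "\<And>j. j \<in> A \<Longrightarrow> a j \<ge> 0"
  shows "card A \<le> 2 * card {j\<in>A. a j \<le> 2 * sum a A / card A}"
proof (cases "sum a A = 0")
  case True
  then have "{j\<in>A. a j \<le> 2 * sum a A / card A} = A"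
    using fin nonneg by (auto simp: sum_nonneg_eq_0_iff)
  then show ?thesis
    by simp
next
  case False
  define c where "c = 2 * sum a A / card A"
  define G where "G = {j\<in>A. a j \<le> c}"
  have pos: "sum a A > 0" "card A > 0"
    using False fin nonneg by (auto simp: sum_nonneg order_le_neq_trans card_gt_0_iff)
  have "real (card (A - G)) * c = (\<Sum>j\<in>A - G. c)"
    by simp
  also have "\<dots> \<le> (\<Sum>j\<in>A - G. a j)"
    by (rule sum_mono) (auto simp: G_def)
  also have "\<dots> \<le> sum a A"
    using fin nonneg by (intro sum_mono2) auto
  finally have "real (card (A - G)) * 2 \<le> card A"
    using pos by (simp add: c_def field_simps)
  moreover have "card (A - G) = card A - card G" "card G \<le> card A"
    using fin by (auto simp: G_def card_Diff_subset intro: card_mono)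
  ultimately show ?thesis
    by (simp add: G_def c_def)
qed

lemma obtain_subset_below_twice_average:
  fixes a :: "'a \<Rightarrow> real"
  assumes "finite A" "\<And>j. j \<in> A \<Longrightarrow> a j \<ge> 0" "2 * m \<le> card A"
  obtains I where "I \<subseteq> A" "card I = m" "\<And>j. j \<in> I \<Longrightarrow> a j \<le> 2 * sum a A / card A"
proof -
  have "m \<le> card {j\<in>A. a j \<le> 2 * sum a A / card A}"
    using card_le_twice_card_below_twice_average[of A a] assms by fastforce
  then obtain I where "I \<subseteq> {j\<in>A. a j \<le> 2 * sum a A / card A}" "card I = m"
    by (meson obtain_subset_with_card_n)
  then show ?thesis
    using that by auto
qed

lemma floor_sqrt_bounds:
  fixes n :: nat
  assumes "4 \<le> n"
  defines "m \<equiv> nat \<lfloor>sqrt (real n)\<rfloor>"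
  shows "2 * m \<le> n" "real m * real m \<le> real n" "sqrt (real n) \<le> 2 * real m"
proof -
  have m_le: "real m \<le> sqrt (real n)" and m_ge: "sqrt (real n) - 1 \<le> real m"
    by (simp_all add: m_def)
  have two_le: "2 \<le> sqrt (real n)"
    using assms real_sqrt_le_mono[of 4 "real n"] by simp
  have "2 * sqrt (real n) \<le> sqrt (real n) * sqrt (real n)"
    using two_le by (intro mult_right_mono) auto
  then show "2 * m \<le> n"
    using m_le by simp
  show "real m * real m \<le> real n"
    using m_le mult_mono[OF m_le m_le] by simp
  show "sqrt (real n) \<le> 2 * real m"
    using m_ge two_le by linarith
qed

section \<open>A fixed scheme on the star graph\<close>

locale star_pir =
  fixes N L :: nat
    and P :: "(nat \<times> (nat \<Rightarrow> nat)) pmf"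
    and ans :: "nat \<Rightarrow> nat \<Rightarrow> (nat \<Rightarrow> bool list) \<Rightarrow> nat"
  assumes scheme: "star_pir_scheme N L P ans"
    and two_le_N: "2 \<le> N"
begin

abbreviation K :: nat where
  "K \<equiv> N - 1"

abbreviation F :: "(nat \<Rightarrow> bool list) pmf" where
  "F \<equiv> files_dist K L"

definition decoder :: "nat \<times> nat list \<times> nat list \<Rightarrow> bool list" where
  "decoder = (SOME dec. \<forall>\<omega>\<in>set_pmf (pair_pmf P F).
     dec (fst (fst \<omega>), map (snd (fst \<omega>)) [1..<N+1], map (\<lambda>i. ans i (snd (fst \<omega>) i) (snd \<omega>)) [1..<N+1])
       = snd \<omega> (fst (fst \<omega>)))"

lemma finite_P: "finite (set_pmf P)"
  and theta_uniform: "map_pmf fst P = pmf_of_set {1..K}"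
  and answer_local: "i \<in> {1..N} \<Longrightarrow> \<forall>j\<in>star_stored N i. w j = w' j \<Longrightarrow> ans i q w = ans i q w'"
  and privacy: "i \<in> {1..N} \<Longrightarrow> cond_entropy (pair_pmf P F) (\<lambda>\<omega>. fst (fst \<omega>))
      (\<lambda>\<omega>. (snd (fst \<omega>) i, restrict_files (star_stored N i) (snd \<omega>))) = log 2 (real K)"
  using scheme by (simp_all add: star_pir_scheme_def Let_def)

lemma decoder_correct:
  assumes "\<omega> \<in> set_pmf (pair_pmf P F)"
  shows "decoder (fst (fst \<omega>), map (snd (fst \<omega>)) [1..<N+1], map (\<lambda>i. ans i (snd (fst \<omega>) i) (snd \<omega>)) [1..<N+1])
    = snd \<omega> (fst (fst \<omega>))"
proof -
  have "\<exists>dec. \<forall>\<omega>\<in>set_pmf (pair_pmf P F).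
      dec (fst (fst \<omega>), map (snd (fst \<omega>)) [1..<N+1], map (\<lambda>i. ans i (snd (fst \<omega>) i) (snd \<omega>)) [1..<N+1])
        = snd \<omega> (fst (fst \<omega>))"
    using scheme by (simp add: star_pir_scheme_def Let_def)
  from someI_ex[OF this] show ?thesis
    using assms unfolding decoder_def by blast
qed

definition query_marginal :: "nat \<Rightarrow> nat pmf" where
  "query_marginal i = map_pmf (\<lambda>p. snd p i) P"

definition queries_given :: "nat \<Rightarrow> (nat \<Rightarrow> nat) pmf" where
  "queries_given k = map_pmf snd (cond_pmf P {p. fst p = k})"

lemma query_indep_theta:
  assumes "i \<in> {1..N}"
  shows "map_pmf (\<lambda>p. (fst p, snd p i)) P = pair_pmf (map_pmf fst P) (query_marginal i)"
proof -
  have "cond_entropy P fst (\<lambda>p. snd p i) = log 2 (real K)"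
    using privacy[OF assms] cond_entropy_pair_pmf_fst_indep[OF finite_P finite_set_files_dist,
        where f = fst and h = "\<lambda>p. snd p i" and g = "restrict_files (star_stored N i)"]
    by simp
  also have "\<dots> = entropy_of P fst"
    using two_le_N by (simp add: entropy_of_def theta_uniform pmf_entropy_pmf_of_set)
  finally show ?thesis
    unfolding query_marginal_def by (rule map_pmf_pair_eq_pair_pmf_if_cond_entropy_eq[OF finite_P])
qed

lemma pmf_theta_pos: "k \<in> {1..K} \<Longrightarrow> pmf (map_pmf fst P) k > 0"
  using two_le_N by (simp add: theta_uniform)

lemma queries_given_marginal:
  assumes "k \<in> {1..K}" "i \<in> {1..N}"
  shows "map_pmf (\<lambda>q. q i) (queries_given k) = query_marginal i"
proof -
  have "map_pmf (\<lambda>p. snd p i) (cond_pmf P {p. fst p = k}) = map_pmf (\<lambda>p. snd p i) P"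
    using query_indep_theta[OF assms(2)] pmf_theta_pos[OF assms(1)]
    by (intro map_pmf_cond_pmf_if_indep) (simp_all add: query_marginal_def)
  then show ?thesis
    by (simp add: queries_given_def query_marginal_def pmf.map_comp o_def)
qed

lemma set_queries_given:
  assumes "k \<in> {1..K}"
  shows "set_pmf (queries_given k) = {q. (k, q) \<in> set_pmf P}"
proof -
  have "k \<in> fst ` set_pmf P"
    using pmf_theta_pos[OF assms] by (metis pmf_positive_iff set_map_pmf)
  then have "set_pmf P \<inter> {p. fst p = k} \<noteq> {}"
    by auto
  then show ?thesis
    by (force simp: queries_given_def)
qed

lemma finite_queries_given:
  assumes "k \<in> {1..K}"
  shows "finite (set_pmf (queries_given k))"
proof -
  have "set_pmf (queries_given k) \<subseteq> snd ` set_pmf P"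
    using assms by (force simp: set_queries_given)
  then show ?thesis
    using finite_P by (rule finite_subset[OF _ finite_imageI])
qed

lemma decoder_given:
  assumes "k \<in> {1..K}" "\<omega> \<in> set_pmf (pair_pmf (queries_given k) F)"
  shows "decoder (k, map (fst \<omega>) [1..<N+1], map (\<lambda>i. ans i (fst \<omega> i) (snd \<omega>)) [1..<N+1]) = snd \<omega> k"
proof -
  have "((k, fst \<omega>), snd \<omega>) \<in> set_pmf (pair_pmf P F)"
    using assms by (cases \<omega>) (simp add: set_queries_given)
  from decoder_correct[OF this] show ?thesis
    by simp
qed

definition answer_entropy :: "nat \<Rightarrow> real" where
  "answer_entropy i = entropy_of (pair_pmf P F) (\<lambda>\<omega>. ans i (snd (fst \<omega>) i) (snd \<omega>))"

definition center_cond_entropy :: "nat set \<Rightarrow> real" where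
  "center_cond_entropy S = cond_entropy (pair_pmf (query_marginal N) F)
     (\<lambda>\<omega>. ans N (fst \<omega>) (snd \<omega>)) (\<lambda>\<omega>. (fst \<omega>, restrict_files S (snd \<omega>)))"

lemma star_pir_rate_eq: "star_pir_rate N L P ans = real L / (\<Sum>i\<in>{1..N}. answer_entropy i)"
  by (simp add: star_pir_rate_def answer_entropy_def entropy_of_def)

lemma answer_entropy_nonneg: "answer_entropy i \<ge> 0"
  by (simp add: answer_entropy_def entropy_of_nonneg)

lemma answer_entropy_eq_marginal:
  "answer_entropy i = entropy_of (pair_pmf (query_marginal i) F) (\<lambda>\<omega>. ans i (fst \<omega>) (snd \<omega>))"
  unfolding answer_entropy_def query_marginal_def
  by (rule entropy_of_pair_pmf_map_fst[where X = "ans i" and h = "\<lambda>p. snd p i"])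

lemma answer_entropy_given:
  assumes "k \<in> {1..K}" "i \<in> {1..N}"
  shows "entropy_of (pair_pmf (queries_given k) F) (\<lambda>\<omega>. ans i (fst \<omega> i) (snd \<omega>)) = answer_entropy i"
  using entropy_of_pair_pmf_map_fst[where X = "ans i" and h = "\<lambda>q. q i" and A = "queries_given k"]
  by (simp add: answer_entropy_eq_marginal queries_given_marginal[OF assms])

lemma center_cond_entropy_given:
  assumes "k \<in> {1..K}"
  shows "cond_entropy (pair_pmf (queries_given k) F) (\<lambda>\<omega>. ans N (fst \<omega> N) (snd \<omega>))
      (\<lambda>\<omega>. (fst \<omega> N, restrict_files S (snd \<omega>))) = center_cond_entropy S"
  using cond_entropy_pair_pmf_map_fst[where X = "ans N" and Y = "\<lambda>q w. (q, restrict_files S w)"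
      and h = "\<lambda>q. q N" and A = "queries_given k"] queries_given_marginal[OF assms, of N] two_le_N
  by (simp add: center_cond_entropy_def)

lemma center_cond_entropy_bounds: "0 \<le> center_cond_entropy S" "center_cond_entropy S \<le> answer_entropy N"
proof -
  have "finite (set_pmf (pair_pmf (query_marginal N) F))"
    using finite_P finite_set_files_dist by (simp add: query_marginal_def)
  then show "0 \<le> center_cond_entropy S" "center_cond_entropy S \<le> answer_entropy N"
    unfolding center_cond_entropy_def answer_entropy_eq_marginal
    by (simp_all add: cond_entropy_nonneg cond_entropy_le_entropy)
qed

lemma leaf_answer_restrict:
  assumes "i \<in> U" "i \<in> {1..K}"
  shows "ans i q (restrict_files U w) = ans i q w"
proof -
  have "i \<noteq> N" "i \<in> {1..N}"
    using assms(2) two_le_N by auto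
  then show ?thesis
    using assms(1) answer_local[of i "restrict_files U w" w] by (simp add: star_stored_def restrict_files_def)
qed

lemma leaf_answers_entropy_le:
  assumes k: "k \<in> {1..K}" and V: "V \<subseteq> {1..N}"
  shows "entropy_of (pair_pmf (queries_given k) F) (\<lambda>\<omega>. (\<lambda>j. if j \<in> V then ans j (fst \<omega> j) (snd \<omega>) else 0))
    \<le> (\<Sum>j\<in>V. answer_entropy j)"
proof -
  have "finite (set_pmf (pair_pmf (queries_given k) F))"
    using finite_queries_given[OF k] finite_set_files_dist by simp
  moreover have "finite V"
    using V finite_subset by blast
  ultimately have "entropy_of (pair_pmf (queries_given k) F) (\<lambda>\<omega>. (\<lambda>j. if j \<in> V then ans j (fst \<omega> j) (snd \<omega>) else 0))
      \<le> (\<Sum>j\<in>V. entropy_of (pair_pmf (queries_given k) F) (\<lambda>\<omega>. ans j (fst \<omega> j) (snd \<omega>)))"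
    by (rule entropy_of_tuple_le_sum)
  also have "\<dots> = (\<Sum>j\<in>V. answer_entropy j)"
    using V by (intro sum.cong refl answer_entropy_given[OF k]) auto
  finally show ?thesis .
qed

lemma file_cond_entropy_given_center_le:
  assumes k: "k \<in> {1..K}"
  defines "M \<equiv> pair_pmf (queries_given k) F"
  shows "cond_entropy M (\<lambda>\<omega>. snd \<omega> k) (\<lambda>\<omega>. (ans N (fst \<omega> N) (snd \<omega>), fst \<omega> N, restrict_files U (snd \<omega>)))
    \<le> (\<Sum>j\<in>{1..K} - U. answer_entropy j)"
proof -
  define V where "V = {1..K} - U"
  define Z where "Z = (\<lambda>\<omega> :: (nat \<Rightarrow> nat) \<times> (nat \<Rightarrow> bool list).
    (ans N (fst \<omega> N) (snd \<omega>), fst \<omega> N, restrict_files U (snd \<omega>)))"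
  define Y where "Y \<omega> = (\<lambda>j. if j \<in> V then ans j (fst \<omega> j) (snd \<omega>) else 0)" for \<omega>
  define dec where "dec = (\<lambda>(y, q, a, _ :: nat, x). decoder (k, map q [1..<N+1],
      map (\<lambda>i. if i = N then a else if i \<in> U then ans i (q i) x else y i) [1..<N+1]))"
  have fin: "finite (set_pmf M)"
    using finite_queries_given[OF k] finite_set_files_dist by (simp add: M_def)
  have answers: "map (\<lambda>i. if i = N then ans N (fst \<omega> N) (snd \<omega>) else if i \<in> U then ans i (fst \<omega> i)
      (restrict_files U (snd \<omega>)) else Y \<omega> i) [1..<N+1] = map (\<lambda>i. ans i (fst \<omega> i) (snd \<omega>)) [1..<N+1]" for \<omega>
    by (intro map_cong refl) (auto simp: Y_def V_def leaf_answer_restrict)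
  have "snd \<omega> k = dec (Y \<omega>, fst \<omega>, Z \<omega>)" if "\<omega> \<in> set_pmf M" for \<omega>
    using decoder_given[OF k that[unfolded M_def]] by (simp only: dec_def Z_def prod.case answers)
  then have "cond_entropy M (\<lambda>\<omega>. snd \<omega> k) Z
      \<le> entropy_of M Y + cond_entropy M fst Z - cond_entropy M fst (\<lambda>\<omega>. (snd \<omega> k, Z \<omega>))"
    by (rule cond_entropy_le_if_decodable[OF fin])
  also have "cond_entropy M fst Z \<le> cond_entropy M fst (\<lambda>\<omega>. (snd \<omega> k, Z \<omega>))"
    unfolding M_def
    by (rule cond_entropy_pair_pmf_fst_mono[OF finite_queries_given[OF k] finite_set_files_dist,
          where h = "\<lambda>q. q N" and \<phi> = "\<lambda>(a, q, x). q" and \<psi> = "\<lambda>(q, w). (w k, ans N q w, q, restrict_files U w)"])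
      (simp_all add: Z_def)
  also have "entropy_of M Y \<le> (\<Sum>j\<in>V. answer_entropy j)"
    unfolding M_def Y_def using k by (intro leaf_answers_entropy_le) (auto simp: V_def)
  finally show ?thesis
    by (simp add: Z_def V_def)
qed

lemma center_cond_entropy_drop:
  assumes k: "k \<in> {1..K}" "k \<notin> U"
  shows "real L - (\<Sum>j\<in>{1..K} - U. answer_entropy j)
    \<le> center_cond_entropy U - center_cond_entropy (insert k U)"
proof -
  define M where "M = pair_pmf (queries_given k) F"
  define A where "A = (\<lambda>\<omega> :: (nat \<Rightarrow> nat) \<times> (nat \<Rightarrow> bool list). ans N (fst \<omega> N) (snd \<omega>))"
  define C where "C = (\<lambda>\<omega> :: (nat \<Rightarrow> nat) \<times> (nat \<Rightarrow> bool list). (fst \<omega> N, restrict_files U (snd \<omega>)))"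
  have fin: "finite (set_pmf M)"
    using finite_queries_given[OF k(1)] finite_set_files_dist by (simp add: M_def)
  have "restrict_files (insert k U) w = (restrict_files U w)(k := w k)"
    and "restrict_files U w = (restrict_files (insert k U) w)(k := [])" for w
    using k(2) by (auto simp: restrict_files_def)
  then have "cond_entropy M A (\<lambda>\<omega>. (fst \<omega> N, restrict_files (insert k U) (snd \<omega>)))
      = cond_entropy M A (\<lambda>\<omega>. (snd \<omega> k, C \<omega>))"
    by (intro cond_entropy_cong_determined[OF fin, where \<phi> = "\<lambda>(a, q, r). (q, r(k := a))"
        and \<psi> = "\<lambda>(q, r). (r k, q, r(k := []))"]) (auto simp: C_def restrict_files_def)
  then have "center_cond_entropy U - center_cond_entropy (insert k U)
      = cond_entropy M A C - cond_entropy M A (\<lambda>\<omega>. (snd \<omega> k, C \<omega>))"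
    using center_cond_entropy_given[OF k(1)] by (simp add: M_def A_def C_def)
  also have "\<dots> = cond_entropy M (\<lambda>\<omega>. snd \<omega> k) C - cond_entropy M (\<lambda>\<omega>. snd \<omega> k) (\<lambda>\<omega>. (A \<omega>, C \<omega>))"
    by (rule cond_entropy_diff_swap[OF fin])
  also have "cond_entropy M (\<lambda>\<omega>. snd \<omega> k) C = real L"
    using cond_entropy_pair_pmf_snd_indep[OF finite_queries_given[OF k(1)] finite_set_files_dist,
        where f = "\<lambda>w. w k" and h = "\<lambda>q. q N" and g = "restrict_files U"]
      cond_entropy_file_given_files[OF k]
    by (simp add: M_def C_def)
  finally show ?thesis
    using file_cond_entropy_given_center_le[OF k(1), of U] by (simp add: M_def A_def C_def)
qed

lemma leaf_subset_bound:
  assumes I: "I \<subseteq> {1..K}"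
  shows "real (card I) * (real L - (\<Sum>j\<in>I. answer_entropy j)) \<le> answer_entropy N"
proof -
  define R where "R = {1..K} - I"
  define U where "U k = R \<union> {j\<in>I. j < k}" for k
  have finI: "finite I"
    using I finite_subset by blast
  have "real L - (\<Sum>j\<in>I. answer_entropy j) \<le> center_cond_entropy (U k) - center_cond_entropy (insert k (U k))"
    if "k \<in> I" for k
  proof -
    have "(\<Sum>j\<in>{1..K} - U k. answer_entropy j) \<le> (\<Sum>j\<in>I. answer_entropy j)"
      using finI by (intro sum_mono2) (auto simp: U_def R_def answer_entropy_nonneg)
    moreover have "k \<in> {1..K}" "k \<notin> U k"
      using that I by (auto simp: U_def R_def)
    ultimately show ?thesis
      using center_cond_entropy_drop[of k "U k"] by linarith
  qed
  then have "real (card I) * (real L - (\<Sum>j\<in>I. answer_entropy j))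
      \<le> (\<Sum>k\<in>I. center_cond_entropy (U k) - center_cond_entropy (insert k (U k)))"
    using sum_mono[of I "\<lambda>_. real L - (\<Sum>j\<in>I. answer_entropy j)"] by simp
  also have "\<dots> = center_cond_entropy R - center_cond_entropy (R \<union> I)"
    unfolding U_def by (rule sum_diff_telescope[OF finI, symmetric])
  also have "\<dots> \<le> answer_entropy N"
    using center_cond_entropy_bounds[of R] center_cond_entropy_bounds[of "R \<union> I"] by simp
  finally show ?thesis .
qed

lemma sqrt_mul_file_length_le_download_cost:
  assumes N: "5 \<le> N"
  shows "sqrt (real K) * real L \<le> 4 * (\<Sum>i\<in>{1..N}. answer_entropy i)"
proof -
  define T where "T = (\<Sum>j\<in>{1..K}. answer_entropy j)"
  define m where "m = nat \<lfloor>sqrt (real K)\<rfloor>"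
  have K: "4 \<le> K" "real K > 0"
    using N by auto
  have T_nonneg: "T \<ge> 0"
    by (simp add: T_def sum_nonneg answer_entropy_nonneg)
  obtain I where I: "I \<subseteq> {1..K}" "card I = m" and cheap: "\<And>j. j \<in> I \<Longrightarrow> answer_entropy j \<le> 2 * T / K"
    using obtain_subset_below_twice_average[of "{1..K}" answer_entropy m] floor_sqrt_bounds(1)[OF K(1)]
    by (auto simp: answer_entropy_nonneg T_def m_def)
  have "(\<Sum>j\<in>I. answer_entropy j) \<le> real m * (2 * T / K)"
    using sum_mono[of I answer_entropy "\<lambda>_. 2 * T / K"] cheap I(2) by simp
  then have "real m * (\<Sum>j\<in>I. answer_entropy j) \<le> real m * (real m * (2 * T / K))"
    by (intro mult_left_mono) auto
  also have "\<dots> = (real m * real m) * (2 * T) / K"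
    by simp
  also have "\<dots> \<le> real K * (2 * T) / K"
    using floor_sqrt_bounds(2)[OF K(1)] T_nonneg K(2)
    by (intro divide_right_mono mult_right_mono) (simp_all add: m_def)
  also have "\<dots> = 2 * T"
    using K(2) by simp
  finally have "real m * real L \<le> answer_entropy N + 2 * T"
    using leaf_subset_bound[OF I(1)] I(2) by (simp add: algebra_simps)
  then have "sqrt (real K) * real L \<le> 4 * (T + answer_entropy N)"
    using floor_sqrt_bounds(3)[OF K(1)] answer_entropy_nonneg[of N] T_nonneg
      mult_right_mono[of "sqrt (real K)" "2 * real m" "real L"]
    by (simp add: m_def)
  moreover have "{1..N} = insert N {1..K}"
    using N by auto
  ultimately show ?thesis
    using N by (simp add: T_def add.commute)
qed

lemma star_pir_rate_le:
  assumes N: "5 \<le> N" and L: "1 \<le> L"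
  shows "star_pir_rate N L P ans \<le> 4 / sqrt (real K)"
proof -
  define D where "D = (\<Sum>i\<in>{1..N}. answer_entropy i)"
  have bound: "sqrt (real K) * real L \<le> 4 * D"
    unfolding D_def by (rule sqrt_mul_file_length_le_download_cost[OF N])
  have sqrt_pos: "sqrt (real K) > 0"
    using N by simp
  then have "0 < 4 * D"
    using L bound by (simp add: less_le_trans[OF _ bound])
  have "real L \<le> 4 * D / sqrt (real K)"
    using bound sqrt_pos by (simp add: pos_le_divide_eq mult.commute)
  then have "real L / D \<le> 4 / sqrt (real K)"
    using \<open>0 < 4 * D\<close> by (simp add: pos_divide_le_eq)
  then show ?thesis
    unfolding star_pir_rate_eq D_def .
qed

end

text \<open>
  Every leaf sends its whole file. This scheme only serves to make the set of rates nonempty, so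
  that the supremum defining \<^const>\<open>star_pir_capacity\<close> is not the junk value \<open>Sup {}\<close>.
\<close>

definition download_queries :: "nat \<Rightarrow> (nat \<times> (nat \<Rightarrow> nat)) pmf" where
  "download_queries K = map_pmf (\<lambda>t. (t, \<lambda>_. 0)) (pmf_of_set {1..K})"

definition download_answers :: "nat \<Rightarrow> nat \<Rightarrow> nat \<Rightarrow> (nat \<Rightarrow> bool list) \<Rightarrow> nat" where
  "download_answers N i q w = (if i < N then to_nat (w i) else 0)"

lemma set_download_queries: "1 \<le> K \<Longrightarrow> set_pmf (download_queries K) = (\<lambda>t. (t, \<lambda>_. 0)) ` {1..K}"
  by (simp add: download_queries_def)

lemma cond_entropy_download_queries:
  assumes K: "1 \<le> K" and fin: "finite (set_pmf B)"
  shows "cond_entropy (pair_pmf (download_queries K) B) (\<lambda>\<omega>. fst (fst \<omega>)) (\<lambda>\<omega>. (snd (fst \<omega>) i, g (snd \<omega>)))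
    = log 2 (real K)"
proof -
  have finP: "finite (set_pmf (download_queries K))"
    using K by (simp add: set_download_queries)
  have "cond_entropy (pair_pmf (download_queries K) B) (\<lambda>\<omega>. fst (fst \<omega>)) (\<lambda>\<omega>. (snd (fst \<omega>) i, g (snd \<omega>)))
      = cond_entropy (download_queries K) fst (\<lambda>p. snd p i)"
    by (rule cond_entropy_pair_pmf_fst_indep[OF finP fin])
  also have "\<dots> = cond_entropy (download_queries K) fst (\<lambda>_. 0 :: nat)"
    using K by (intro cond_entropy_cong_determined[OF finP, where \<phi> = "\<lambda>_. 0" and \<psi> = "\<lambda>_. 0"])
      (auto simp: set_download_queries)
  also have "\<dots> = log 2 (real K)"
    unfolding cond_entropy_const[OF finP] using K
    by (simp add: entropy_of_def download_queries_def pmf.map_comp o_def pmf_entropy_pmf_of_set)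
  finally show ?thesis .
qed

lemma star_pir_scheme_download:
  assumes "2 \<le> N"
  shows "star_pir_scheme N L (download_queries (N - 1)) (download_answers N)"
proof -
  define K where "K = N - 1"
  define dec where "dec = (\<lambda>(t :: nat, _ :: nat list, as :: nat list). from_nat (as ! (t - 1)) :: bool list)"
  have K: "1 \<le> K" "N = Suc K"
    using assms by (auto simp: K_def)
  have "dec (t, qs, map (\<lambda>i. download_answers N i 0 w) [1..<N+1]) = w t" if "t \<in> {1..K}" for t qs w
  proof -
    have "t - 1 < length [1..<N+1]" "[1..<N+1] ! (t - 1) = t"
      using that K by (auto simp del: upt_Suc)
    then show ?thesis
      using that K by (simp add: dec_def download_answers_def del: upt_Suc)
  qed
  then have decoding: "\<forall>\<omega>\<in>set_pmf (pair_pmf (download_queries K) (files_dist K L)).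
      dec (fst (fst \<omega>), map (snd (fst \<omega>)) [1..<N+1], map (\<lambda>i. download_answers N i (snd (fst \<omega>) i) (snd \<omega>)) [1..<N+1])
        = snd \<omega> (fst (fst \<omega>))"
    using K by (auto simp: set_download_queries)
  show ?thesis
    unfolding star_pir_scheme_def Let_def K_def[symmetric]
  proof (intro conjI ballI allI impI)
    show "finite (set_pmf (download_queries K))"
      using K by (simp add: set_download_queries)
    show "map_pmf fst (download_queries K) = pmf_of_set {1..K}"
      by (simp add: download_queries_def pmf.map_comp o_def)
    show "download_answers N i q w = download_answers N i q w'"
      if "\<forall>j\<in>star_stored N i. w j = w' j" for i q w w'
      using that by (simp add: download_answers_def star_stored_def)
    show "cond_entropy (pair_pmf (download_queries K) (files_dist K L)) (\<lambda>\<omega>. fst (fst \<omega>))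
        (\<lambda>\<omega>. (snd (fst \<omega>) i, restrict_files (star_stored N i) (snd \<omega>))) = log 2 (real K)" for i
      by (rule cond_entropy_download_queries[OF K(1) finite_set_files_dist])
  qed (use decoding in blast)
qed

lemma star_pir_rate_nonneg: "star_pir_rate N L P ans \<ge> 0"
  unfolding star_pir_rate_def by (intro divide_nonneg_nonneg sum_nonneg) (simp_all add: pmf_entropy_nonneg)

lemma star_pir_capacity_le:
  assumes N: "5 \<le> N"
  shows "0 \<le> star_pir_capacity N" "star_pir_capacity N \<le> 4 / sqrt (real (N - 1))"
proof -
  define rates where "rates = {star_pir_rate N L P ans | L P ans. L \<ge> 1 \<and> star_pir_scheme N L P ans}"
  define P where "P = download_queries (N - 1)"
  define ans where "ans = download_answers N"
  have "star_pir_scheme N 1 P ans"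
    using N star_pir_scheme_download[of N 1] by (simp add: P_def ans_def)
  then have some_rate: "star_pir_rate N 1 P ans \<in> rates"
    by (auto simp: rates_def)
  have upper: "r \<le> 4 / sqrt (real (N - 1))" if "r \<in> rates" for r
  proof -
    obtain L P ans where "r = star_pir_rate N L P ans" "1 \<le> L" "star_pir_scheme N L P ans"
      using \<open>r \<in> rates\<close> by (auto simp: rates_def)
    moreover from this have "star_pir N L P ans"
      using N by unfold_locales simp_all
    ultimately show ?thesis
      using N star_pir.star_pir_rate_le by blast
  qed
  have "star_pir_capacity N = Sup rates"
    by (simp add: star_pir_capacity_def rates_def)
  moreover have "star_pir_rate N 1 P ans \<le> Sup rates"
    using some_rate upper by (intro cSup_upper bdd_aboveI) auto
  moreover have "Sup rates \<le> 4 / sqrt (real (N - 1))"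
    using some_rate upper by (intro cSup_least) auto
  ultimately show "0 \<le> star_pir_capacity N" "star_pir_capacity N \<le> 4 / sqrt (real (N - 1))"
    using star_pir_rate_nonneg[of N 1 P ans] by linarith+
qed

lemma four_div_sqrt_pred_le:
  assumes "2 \<le> N"
  shows "4 / sqrt (real (N - 1)) \<le> 8 / sqrt (real N)"
proof -
  have "real N \<le> 4 * real (N - 1)"
    using assms by simp
  then have "sqrt (real N) \<le> 2 * sqrt (real (N - 1))"
    using real_sqrt_le_mono by (fastforce simp: real_sqrt_mult)
  then show ?thesis
    using assms by (simp add: divide_simps)
qed

theorem theorem3:
  shows "star_pir_capacity \<in> O(\<lambda>N. 1 / sqrt (real N))"
proof (rule bigoI[where c = 8])
  show "\<forall>\<^sub>F N in at_top. norm (star_pir_capacity N) \<le> 8 * norm (1 / sqrt (real N))"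
    using eventually_ge_at_top[of 5]
  proof (rule eventually_mono)
    fix N :: nat
    assume "5 \<le> N"
    then show "norm (star_pir_capacity N) \<le> 8 * norm (1 / sqrt (real N))"
      using star_pir_capacity_le[of N] four_div_sqrt_pred_le[of N] by simp
  qed
qed

end
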